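(* Let $l\ge1$. Let $\mathcal I_e(l)$ (resp. $\mathcal I_o(l)$) denote the set of $l\times l$ diagonal matrices whose diagonal entries are each $1$ or $-1$ and which have an even (resp. odd) number of entries $-1$. Then for every $x\in\mathbb{R}$ and every $l\times l$ matrix $A$, $$\sum_{\overline I\in\mathcal I_e(l)}\det(xI+\overline IA)=2^{l-1}(x^l+\det A),\qquad \sum_{\overline I\in\mathcal I_o(l)}\det(xI+\overline IA)=2^{l-1}(x^l-\det A).$$
   Context: $I$ denotes the $l\times l$ identity matrix. *)

theory Defs
  imports "HOL-Analysis.Analysis"
begin

definition sign_diag_mats :: "(real^'n^'n) set" where
  "sign_diag_mats = {D. (\<forall>i j. i \<noteq> j \<longrightarrow> D $ i $ j = 0) \<and> (\<forall>i. D $ i $ i = 1 \<or> D $ i $ i = -1)}"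

definition I_even :: "(real^'n^'n) set" where
  "I_even = {D \<in> sign_diag_mats. even (card {i. D $ i $ i = -1})}"

definition I_odd :: "(real^'n^'n) set" where
  "I_odd = {D \<in> sign_diag_mats. odd (card {i. D $ i $ i = -1})}"

end

theory Submission
  imports Defs
begin

text \<open>Write \<open>D\<^sub>s\<close> for the diagonal matrix with sign vector \<open>s \<in> {1,-1}\<^sup>l\<close>. Row \<open>i\<close> of \<open>B + D\<^sub>s A\<close>
  is \<open>B\<^sub>i + s\<^sub>i A\<^sub>i\<close>, so every term of the Leibniz expansion of \<open>det (B + D\<^sub>s A)\<close> is a product
  of factors affine in the individual signs \<open>s\<^sub>i\<close>. Summing over all \<open>s\<close> kills the odd part of
  each factor and leaves \<open>2\<^sup>l det B\<close>; summing with the weight \<open>\<Prod>\<^sub>i s\<^sub>i\<close> kills the even part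
  and leaves \<open>2\<^sup>l det A\<close>. The indicator of an even (odd) number of \<open>-1\<close>'s is
  \<open>(1 \<plusminus> \<Prod>\<^sub>i s\<^sub>i) / 2\<close>, and \<open>det (x I) = x\<^sup>l\<close>.\<close>

definition sign_vectors :: "('n::finite \<Rightarrow> 'a::ring_1) set" where
  "sign_vectors = PiE UNIV (\<lambda>_. {1, -1})"

definition diag_mat :: "('n::finite \<Rightarrow> 'a::zero) \<Rightarrow> 'a^'n^'n" where
  "diag_mat s = (\<chi> i j. if i = j then s i else 0)"

lemma finite_sign_vectors [simp]: "finite (sign_vectors :: ('n::finite \<Rightarrow> 'a::ring_1) set)"
  unfolding sign_vectors_def by (intro finite_PiE) auto

lemma sum_sign_vectors_prod_affine:
  fixes c d :: "'n::finite \<Rightarrow> 'a::{comm_ring_1, ring_char_0}"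
  shows "(\<Sum>s\<in>sign_vectors. \<Prod>i\<in>UNIV. c i + s i * d i) = 2 ^ CARD('n) * (\<Prod>i\<in>UNIV. c i)"
proof -
  have "(\<Sum>s\<in>sign_vectors. \<Prod>i\<in>UNIV. c i + s i * d i) = (\<Prod>i\<in>UNIV. \<Sum>y\<in>{1,-1}. c i + y * d i)"
    unfolding sign_vectors_def by (rule prod_sum_PiE[symmetric]) auto
  also have "\<dots> = (\<Prod>i\<in>UNIV. 2 * c i)"
    by simp
  finally show ?thesis
    by (simp add: prod.distrib)
qed

lemma sum_sign_vectors_signed_prod_affine:
  fixes c d :: "'n::finite \<Rightarrow> 'a::{comm_ring_1, ring_char_0}"
  shows "(\<Sum>s\<in>sign_vectors. (\<Prod>i\<in>UNIV. s i) * (\<Prod>i\<in>UNIV. c i + s i * d i))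
    = 2 ^ CARD('n) * (\<Prod>i\<in>UNIV. d i)"
proof -
  have "(\<Sum>s\<in>sign_vectors. (\<Prod>i\<in>UNIV. s i) * (\<Prod>i\<in>UNIV. c i + s i * d i))
      = (\<Sum>s\<in>sign_vectors. \<Prod>i\<in>UNIV. s i * (c i + s i * d i))"
    by (simp add: prod.distrib)
  also have "\<dots> = (\<Prod>i\<in>UNIV. \<Sum>y\<in>{1,-1}. y * (c i + y * d i))"
    unfolding sign_vectors_def by (rule prod_sum_PiE[symmetric]) auto
  also have "\<dots> = (\<Prod>i\<in>UNIV. 2 * d i)"
    by (simp add: algebra_simps)
  finally show ?thesis
    by (simp add: prod.distrib)
qed

lemma diag_mat_nth_diag [simp]: "diag_mat s $ i $ i = s i"
  by (simp add: diag_mat_def)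

lemma diag_mat_mult_nth:
  fixes A :: "'a::semiring_1^'n::finite^'m"
  shows "(diag_mat s ** A) $ i $ j = s i * A $ i $ j"
proof -
  have "(diag_mat s ** A) $ i $ j = (\<Sum>k\<in>UNIV. if i = k then s i * A $ k $ j else 0)"
    unfolding diag_mat_def matrix_matrix_mult_def vec_lambda_beta by (intro sum.cong) auto
  then show ?thesis
    by simp
qed

lemma sum_sign_vectors_det:
  fixes A B :: "'a::{comm_ring_1, ring_char_0}^'n::finite^'n"
  shows "(\<Sum>s\<in>sign_vectors. det (B + diag_mat s ** A)) = 2 ^ CARD('n) * det B"
proof -
  have "(\<Sum>s\<in>sign_vectors. det (B + diag_mat s ** A)) = (\<Sum>p\<in>{p. p permutes UNIV}.
      of_int (sign p) * (\<Sum>s\<in>sign_vectors. \<Prod>i\<in>UNIV. B $ i $ p i + s i * A $ i $ p i))"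
    unfolding det_def by (subst sum.swap) (simp add: diag_mat_mult_nth sum_distrib_left)
  then show ?thesis
    by (simp add: sum_sign_vectors_prod_affine det_def sum_distrib_left algebra_simps)
qed

lemma sum_sign_vectors_signed_det:
  fixes A B :: "'a::{comm_ring_1, ring_char_0}^'n::finite^'n"
  shows "(\<Sum>s\<in>sign_vectors. (\<Prod>i\<in>UNIV. s i) * det (B + diag_mat s ** A)) = 2 ^ CARD('n) * det A"
proof -
  have "(\<Sum>s\<in>sign_vectors. (\<Prod>i\<in>UNIV. s i) * det (B + diag_mat s ** A))
      = (\<Sum>p\<in>{p. p permutes UNIV}. of_int (sign p) * (\<Sum>s\<in>sign_vectors.
          (\<Prod>i\<in>UNIV. s i) * (\<Prod>i\<in>UNIV. B $ i $ p i + s i * A $ i $ p i)))"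
    unfolding det_def sum_distrib_left
    by (subst sum.swap) (simp add: diag_mat_mult_nth algebra_simps)
  then show ?thesis
    by (simp add: sum_sign_vectors_signed_prod_affine det_def sum_distrib_left algebra_simps)
qed

lemma prod_sign_vector:
  fixes s :: "'n::finite \<Rightarrow> 'a::comm_ring_1"
  assumes "s \<in> sign_vectors"
  shows "(\<Prod>i\<in>UNIV. s i) = (-1) ^ card {i. s i = -1}"
proof -
  have "(\<Prod>i\<in>UNIV. s i) = (\<Prod>i\<in>UNIV. if i \<in> {i. s i = -1} then -1 else 1)"
    using assms by (intro prod.cong) (auto simp: sign_vectors_def)
  then show ?thesis
    by (simp add: prod.If_cases)
qed

lemma inj_diag_mat: "inj (diag_mat :: ('n::finite \<Rightarrow> 'a::zero) \<Rightarrow> 'a^'n^'n)"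
proof (rule injI)
  fix s t :: "'n \<Rightarrow> 'a"
  assume "diag_mat s = diag_mat t"
  then show "s = t"
    by (metis diag_mat_nth_diag ext)
qed

lemma sign_diag_mats_eq_image: "sign_diag_mats = diag_mat ` sign_vectors"
proof
  show "diag_mat ` sign_vectors \<subseteq> sign_diag_mats"
    by (auto simp: sign_diag_mats_def diag_mat_def sign_vectors_def)
  show "sign_diag_mats \<subseteq> diag_mat ` sign_vectors"
  proof
    fix D :: "real^'n^'n"
    assume D: "D \<in> sign_diag_mats"
    then have "D = diag_mat (\<lambda>i. D $ i $ i)"
      by (auto simp: sign_diag_mats_def diag_mat_def vec_eq_iff)
    moreover have "(\<lambda>i. D $ i $ i) \<in> sign_vectors"
      using D by (auto simp: sign_diag_mats_def sign_vectors_def)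
    ultimately show "D \<in> diag_mat ` sign_vectors"
      by blast
  qed
qed

lemma sum_sign_diag_mats_filter:
  "(\<Sum>D\<in>{D \<in> sign_diag_mats. P (card {i. D $ i $ i = -1})}. f D)
    = (\<Sum>s\<in>sign_vectors. if P (card {i. s i = -1}) then f (diag_mat s) else 0)"
proof -
  have "finite (sign_diag_mats :: (real^'n^'n) set)"
    unfolding sign_diag_mats_eq_image by simp
  then have "(\<Sum>D\<in>{D \<in> sign_diag_mats. P (card {i. D $ i $ i = -1})}. f D)
      = (\<Sum>D\<in>sign_diag_mats. if P (card {i. D $ i $ i = -1}) then f D else 0)"
    by (rule sum.inter_filter)
  also have "\<dots> = (\<Sum>s\<in>sign_vectors. if P (card {i. s i = -1}) then f (diag_mat s) else 0)"
    unfolding sign_diag_mats_eq_image by (simp add: sum.reindex[OF inj_on_subset[OF inj_diag_mat]])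
  finally show ?thesis .
qed

lemma sum_I_even:
  "(\<Sum>D\<in>I_even. f D) = ((\<Sum>s\<in>sign_vectors. f (diag_mat s))
    + (\<Sum>s\<in>sign_vectors. (\<Prod>i\<in>UNIV. s i) * f (diag_mat s))) / 2"
proof -
  have "(\<Sum>D\<in>I_even. f D) = (\<Sum>s\<in>sign_vectors. (f (diag_mat s) + (\<Prod>i\<in>UNIV. s i) * f (diag_mat s)) / 2)"
    unfolding I_even_def sum_sign_diag_mats_filter by (intro sum.cong) (auto simp: prod_sign_vector)
  then show ?thesis
    by (simp add: sum_divide_distrib[symmetric] sum.distrib)
qed

lemma sum_I_odd:
  "(\<Sum>D\<in>I_odd. f D) = ((\<Sum>s\<in>sign_vectors. f (diag_mat s))
    - (\<Sum>s\<in>sign_vectors. (\<Prod>i\<in>UNIV. s i) * f (diag_mat s))) / 2"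
proof -
  have "(\<Sum>D\<in>I_odd. f D) = (\<Sum>s\<in>sign_vectors. (f (diag_mat s) - (\<Prod>i\<in>UNIV. s i) * f (diag_mat s)) / 2)"
    unfolding I_odd_def sum_sign_diag_mats_filter[where P = odd]
    by (intro sum.cong) (auto simp: prod_sign_vector)
  then show ?thesis
    by (simp add: sum_divide_distrib[symmetric] sum_subtractf)
qed

theorem lemma2p1:
  fixes x :: real and A :: "real^'n^'n"
  shows "(\<Sum>D\<in>I_even. det (x *\<^sub>R mat 1 + D ** A)) = 2 ^ (CARD('n) - 1) * (x ^ CARD('n) + det A) \<and>
         (\<Sum>D\<in>I_odd. det (x *\<^sub>R mat 1 + D ** A)) = 2 ^ (CARD('n) - 1) * (x ^ CARD('n) - det A)"
proof -
  have "det (x *\<^sub>R mat 1 :: real^'n^'n) = x ^ CARD('n)"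
    by (subst det_diagonal) (auto simp: mat_def)
  then have sum_det: "(\<Sum>s\<in>sign_vectors. det (x *\<^sub>R mat 1 + diag_mat s ** A)) = 2 ^ CARD('n) * x ^ CARD('n)"
    by (simp add: sum_sign_vectors_det)
  have two_pow: "(2::real) ^ CARD('n) = 2 * 2 ^ (CARD('n) - 1)"
    by (simp add: power_eq_if)
  show ?thesis
    unfolding sum_I_even sum_I_odd sum_det sum_sign_vectors_signed_det two_pow
    by (simp add: field_simps)
qed

end
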